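(* Let $\mathbb K$ be a field and $\alpha,\beta\in\mathbb K^\times$. Let $A=A_{\alpha,\beta}$ be the graded $\mathbb K$-algebra generated by the six degree-one elements $Y=\{a,b,c,x,y,z\}$ subject to the $26$ relations $$bY\cup Ya\cup\{x,y,z\}^2\cup\{a(x+y-z),\ (x-y)b,\ (x-z)b,\ xc-\alpha cx,\ yc-\beta cy,\ zc-cz\}$$ (here $bY=\{bu\mid u\in Y\}$, $Ya=\{ua\mid u\in Y\}$, $\{x,y,z\}^2$ is the set of the nine products of two of $x,y,z$). Then for every $n\ge0$ $$h_A(n+3)=\begin{cases}11,&\alpha^n+\beta^n=1,\\10,&\alpha^n+\beta^n\ne1.\end{cases}$$ In particular, the equation $\alpha^n+\beta^n=1$ has no solution with $\alpha,\beta\in\mathbb K^\times$ for any $n\ge3$ if and only if $h_{A_{\alpha,\beta}}(i)=10$ for all $i\ge6$ and all $\alpha,\beta\in\mathbb K^\times$.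
   Context: $h_A(n)=\dim A_n$. *)

theory Defs
  imports Complex_Main "HOL-Library.Function_Algebras"
begin

datatype gen = Ga | Gb | Gc | Gx | Gy | Gz

text \<open>Noncommutative polynomials over a field 'k are coefficient functions on words
  (lists of generators). Scalar multiplication is pointwise.\<close>
definition scaleF :: "'k::field \<Rightarrow> (gen list \<Rightarrow> 'k) \<Rightarrow> (gen list \<Rightarrow> 'k)" where
  "scaleF c f = (\<lambda>w. c * f w)"

lemma vector_space_scaleF: "vector_space (scaleF :: 'k::field \<Rightarrow> _)"
  unfolding vector_space_def scaleF_def by (auto simp: fun_eq_iff algebra_simps)

definition poly_of :: "('k::field \<times> gen list) list \<Rightarrow> (gen list \<Rightarrow> 'k)" where
  "poly_of ts = (\<lambda>w. sum_list (map (\<lambda>(c, m). if w = m then c else 0) ts))"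

definition wrap :: "gen list \<Rightarrow> gen list \<Rightarrow> ('k::field \<times> gen list) list \<Rightarrow> (gen list \<Rightarrow> 'k)" where
  "wrap u v ts = poly_of (map (\<lambda>(c, m). (c, u @ m @ v)) ts)"

definition allgens :: "gen list" where
  "allgens = [Ga, Gb, Gc, Gx, Gy, Gz]"

definition rels :: "'k::field \<Rightarrow> 'k \<Rightarrow> ('k \<times> gen list) list set" where
  "rels \<alpha> \<beta> =
     {[(1, [Gb, u])] | u. u \<in> set allgens}
   \<union> {[(1, [u, Ga])] | u. u \<in> set allgens}
   \<union> {[(1, [u, v])] | u v. u \<in> {Gx, Gy, Gz} \<and> v \<in> {Gx, Gy, Gz}}
   \<union> {[(1, [Ga, Gx]), (1, [Ga, Gy]), (-1, [Ga, Gz])],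
      [(1, [Gx, Gb]), (-1, [Gy, Gb])],
      [(1, [Gx, Gb]), (-1, [Gz, Gb])],
      [(1, [Gx, Gc]), (-\<alpha>, [Gc, Gx])],
      [(1, [Gy, Gc]), (-\<beta>, [Gc, Gy])],
      [(1, [Gz, Gc]), (-1, [Gc, Gz])]}"

text \<open>Spanning set of the degree-n part I_n of the two-sided ideal generated by the relations.\<close>
definition idealgens :: "'k::field \<Rightarrow> 'k \<Rightarrow> nat \<Rightarrow> (gen list \<Rightarrow> 'k) set" where
  "idealgens \<alpha> \<beta> n = {wrap u v r | u v r. r \<in> rels \<alpha> \<beta> \<and> length u + length v + 2 = n}"

text \<open>Hilbert function: dim A_n = dim (free algebra)_n - dim I_n = 6^n - dim I_n.\<close>
definition hA :: "'k::field \<Rightarrow> 'k \<Rightarrow> nat \<Rightarrow> nat" where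
  "hA \<alpha> \<beta> n = 6 ^ n - vector_space.dim (scaleF :: 'k \<Rightarrow> _) (idealgens \<alpha> \<beta> n)"

end

theory Submission
  imports Defs
begin

text \<open>Modulo the relations, moving u \<in> {x, y, z} to the right past c^k costs the scalar
  \<alpha>^k, \<beta>^k or 1. Hence a c^k z = \<alpha>^k a c^k x + \<beta>^k a c^k y in A, and together with
  x b = y b = z b this gives (1 - \<alpha>^k - \<beta>^k) a c^k x b = 0. Reading a word from the left,
  a finite automaton therefore reduces it to a combination of the normal words c^(n+3), a c^(n+2),
  c^(n+2) u, a c^(n+1) x, a c^(n+1) y, c^(n+2) b, c^(n+1) x b, a c^(n+1) b of degree n + 3, plus
  a c^n x b when \<alpha>^n + \<beta>^n = 1. Conversely, the linear map sending a word to its reduction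
  annihilates every generator of the ideal, which is checked relation by relation; so the normal
  words are independent modulo the ideal, and h_A(n + 3) is their number, 10 or 11.\<close>

interpretation V: vector_space "scaleF :: 'k::field \<Rightarrow> (gen list \<Rightarrow> 'k) \<Rightarrow> _"
  by (rule vector_space_scaleF)

definition word :: "gen list \<Rightarrow> gen list \<Rightarrow> 'k::field" where
  "word w = (\<lambda>t. if t = w then 1 else 0)"

lemma scaleF_apply [simp]: "scaleF c f t = c * f t"
  by (simp add: scaleF_def)

lemma scaleF_one [simp]: "scaleF 1 f = f"
  by (simp add: scaleF_def)

lemma sum_fun_apply: "(\<Sum>x\<in>A. f x) t = (\<Sum>x\<in>A. f x t)"
  by (induct A rule: infinite_finite_induct) auto

lemma expansion_in_words:
  assumes "finite W" and "\<And>t. t \<notin> W \<Longrightarrow> g t = 0"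
  shows "g = (\<Sum>w\<in>W. scaleF (g w) (word w))"
proof
  fix t
  show "g t = (\<Sum>w\<in>W. scaleF (g w) (word w)) t"
    using assms by (cases "t \<in> W") (auto simp: sum_fun_apply word_def if_distrib cong: if_cong)
qed

lemma independent_word_minus_nf:
  fixes nf :: "gen list \<Rightarrow> gen list \<Rightarrow> 'k::field"
  assumes "finite W" and nf_supp: "\<And>w t. w \<in> W \<Longrightarrow> t \<notin> N \<Longrightarrow> nf w t = 0"
  shows "inj_on (\<lambda>w. word w - nf w) (W - N)"
    and "V.independent ((\<lambda>w. word w - nf w) ` (W - N))"
proof -
  define h where "h w = word w - nf w" for w
  have h: "h w t = (if t = w then 1 else 0)" if "w \<in> W" "t \<notin> N" for w t
    using nf_supp[OF that] by (simp add: h_def word_def)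
  show inj: "inj_on (\<lambda>w. word w - nf w) (W - N)"
    by (rule inj_onI) (metis DiffE h h_def zero_neq_one)
  show "V.independent ((\<lambda>w. word w - nf w) ` (W - N))"
  proof (rule V.independent_if_scalars_zero)
    show "finite ((\<lambda>w. word w - nf w) ` (W - N))"
      using \<open>finite W\<close> by simp
  next
    fix f x
    assume sum: "(\<Sum>x\<in>(\<lambda>w. word w - nf w) ` (W - N). scaleF (f x) x) = 0"
      and "x \<in> (\<lambda>w. word w - nf w) ` (W - N)"
    then obtain w0 where w0: "w0 \<in> W - N" "x = h w0"
      by (auto simp: h_def)
    have "0 = (\<Sum>w\<in>W - N. scaleF (f (h w)) (h w)) w0"
      using sum by (simp add: sum.reindex[OF inj] h_def)
    also have "\<dots> = (\<Sum>w\<in>W - N. f (h w) * (if w0 = w then 1 else 0))"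
      unfolding sum_fun_apply using w0 h by (intro sum.cong) auto
    also have "\<dots> = f x"
      using w0 \<open>finite W\<close> by (simp add: if_distrib cong: if_cong)
    finally show "f x = 0" ..
  qed
qed

lemma dim_by_normal_form:
  fixes I :: "(gen list \<Rightarrow> 'k::field) set" and nf :: "gen list \<Rightarrow> gen list \<Rightarrow> 'k"
  assumes "finite W" and "N \<subseteq> W"
    and I_supp: "\<And>g t. g \<in> I \<Longrightarrow> t \<notin> W \<Longrightarrow> g t = 0"
    and nf_kills_I: "\<And>g. g \<in> I \<Longrightarrow> (\<Sum>w\<in>W. scaleF (g w) (nf w)) = 0"
    and word_diff_in_span: "\<And>w. w \<in> W \<Longrightarrow> word w - nf w \<in> V.span I"
    and nf_normal: "\<And>t. t \<in> N \<Longrightarrow> nf t = word t"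
    and nf_supp: "\<And>w t. w \<in> W \<Longrightarrow> t \<notin> N \<Longrightarrow> nf w t = 0"
  shows "V.dim I = card W - card N"
proof -
  define J where "J = (\<lambda>w. word w - nf w) ` (W - N)"
  note inj = independent_word_minus_nf(1)[OF \<open>finite W\<close> nf_supp]
  have "V.span I \<subseteq> V.span J"
  proof (rule V.span_minimal[OF _ V.subspace_span], rule subsetI)
    fix g assume g: "g \<in> I"
    have "g = (\<Sum>w\<in>W. scaleF (g w) (word w)) - (\<Sum>w\<in>W. scaleF (g w) (nf w))"
      using expansion_in_words[OF \<open>finite W\<close> I_supp[OF g]] nf_kills_I[OF g] by simp
    also have "\<dots> = (\<Sum>w\<in>W - N. scaleF (g w) (word w - nf w))"
      using \<open>finite W\<close> \<open>N \<subseteq> W\<close> nf_normal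
      by (simp add: V.scale_right_diff_distrib sum_subtractf[symmetric])
        (rule sum.mono_neutral_right, auto)
    also have "\<dots> \<in> V.span J"
      by (intro V.span_sum V.span_scale V.span_base) (auto simp: J_def)
    finally show "g \<in> V.span J" .
  qed
  moreover have "V.span J \<subseteq> V.span I"
    using word_diff_in_span by (intro V.span_minimal[OF _ V.subspace_span]) (auto simp: J_def)
  ultimately have "V.dim I = V.dim J"
    by (metis V.dim_span subset_antisym)
  also have "\<dots> = card J"
    unfolding J_def by (rule V.dim_eq_card_independent[OF independent_word_minus_nf(2)]) fact+
  also have "\<dots> = card W - card N"
    using card_image[OF inj] \<open>finite W\<close> \<open>N \<subseteq> W\<close> by (simp add: J_def card_Diff_subset finite_subset)
  finally show ?thesis .
qed

lemma homogeneous_component_in_span: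
  fixes G :: "nat \<Rightarrow> (gen list \<Rightarrow> 'k::field) set"
  assumes G_homogeneous: "\<And>n g t. g \<in> G n \<Longrightarrow> length t \<noteq> n \<Longrightarrow> g t = 0"
    and "f \<in> V.span (\<Union>n. G n)" and f_homogeneous: "\<And>t. length t \<noteq> m \<Longrightarrow> f t = 0"
  shows "f \<in> V.span (G m)"
proof -
  define proj :: "(gen list \<Rightarrow> 'k) \<Rightarrow> gen list \<Rightarrow> 'k"
    where "proj f = (\<lambda>t. if length t = m then f t else 0)" for f
  have "V.span (\<Union>n. G n) \<subseteq> {f. proj f \<in> V.span (G m)}"
  proof (rule V.span_minimal)
    show "(\<Union>n. G n) \<subseteq> {f. proj f \<in> V.span (G m)}"
    proof clarify
      fix n g assume g: "g \<in> G n"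
      then have "proj g = (if n = m then g else 0)"
        using G_homogeneous by (auto simp: proj_def fun_eq_iff)
      then show "proj g \<in> V.span (G m)"
        using g by (auto simp: V.span_base V.span_zero)
    qed
    have "proj 0 = 0" "proj (x + y) = proj x + proj y" "proj (scaleF c x) = scaleF c (proj x)"
      for x y c by (auto simp: proj_def fun_eq_iff)
    then show "V.subspace {f. proj f \<in> V.span (G m)}"
      by (intro V.subspaceI) (auto intro: V.span_zero V.span_add V.span_scale)
  qed
  moreover have "proj f = f"
    using f_homogeneous by (auto simp: proj_def fun_eq_iff)
  ultimately show ?thesis
    using \<open>f \<in> V.span (\<Union>n. G n)\<close> by auto
qed

lemma UNIV_gen: "(UNIV :: gen set) = set allgens"
  by (auto simp: allgens_def intro: gen.exhaust)

instance gen :: finite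
  by standard (simp add: UNIV_gen)

lemma finite_words_length [simp]: "finite {w :: gen list. length w = m}"
  using finite_lists_length_eq[OF finite_UNIV, of m] by simp

lemma card_words_length: "card {w :: gen list. length w = m} = 6 ^ m"
proof -
  have "card (UNIV :: gen set) = 6"
    unfolding UNIV_gen allgens_def by simp
  then show ?thesis
    using card_lists_length_eq[of "UNIV :: gen set" m] by simp
qed

lemma sum_poly_of_mult:
  assumes "finite W" and "\<forall>(c, m)\<in>set ts. m \<in> W"
  shows "(\<Sum>w\<in>W. poly_of ts w * F w) = (\<Sum>(c, m)\<leftarrow>ts. c * F m)"
  using assms
proof (induct ts)
  case Nil
  then show ?case by (simp add: poly_of_def)
next
  case (Cons cm ts)
  obtain c m where cm: "cm = (c, m)" by fastforce
  have "(\<Sum>w\<in>W. poly_of (cm # ts) w * F w)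
      = (\<Sum>w\<in>W. if w = m then c * F m else 0) + (\<Sum>w\<in>W. poly_of ts w * F w)"
    by (auto simp: poly_of_def cm sum.distrib[symmetric] distrib_right intro!: sum.cong)
  with Cons show ?case by (simp add: cm)
qed

text \<open>A state stands for the word state_word q, to which the prefix read so far is congruent up
  to a scalar; Dead means that the prefix lies in the ideal. Ended p k True stands for
  a^p c^k u b with any u \<in> {x, y, z}, all of which are congruent to a^p c^k x b.\<close>

datatype state = Prefix bool nat | Letter bool nat gen | Ended bool nat bool | Dead

fun step :: "state \<Rightarrow> gen \<Rightarrow> state" where
  "step (Prefix p k) g = (case g of
      Ga \<Rightarrow> if \<not> p \<and> k = 0 then Prefix True 0 else Dead
    | Gb \<Rightarrow> Ended p k False
    | Gc \<Rightarrow> Prefix p (Suc k)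
    | _ \<Rightarrow> Letter p k g)"
| "step (Letter p k u) g = (case g of
      Gc \<Rightarrow> Letter p (Suc k) u
    | Gb \<Rightarrow> Ended p k True
    | _ \<Rightarrow> Dead)"
| "step (Ended p k h) g = Dead"
| "step Dead g = Dead"

fun state_word :: "state \<Rightarrow> gen list" where
  "state_word (Prefix p k) = (if p then [Ga] else []) @ replicate k Gc"
| "state_word (Letter p k u) = (if p then [Ga] else []) @ replicate k Gc @ [u]"
| "state_word (Ended p k h) = (if p then [Ga] else []) @ replicate k Gc @ (if h then [Gx, Gb] else [Gb])"
| "state_word Dead = []"

fun valid_state :: "state \<Rightarrow> bool" where
  "valid_state (Letter p k u) = (u \<in> {Gx, Gy, Gz})"
| "valid_state _ = True"

lemma valid_state_step: "valid_state q \<Longrightarrow> valid_state (step q g)"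
  by (cases q; cases g) auto

lemma length_state_word_step:
  "step q g \<noteq> Dead \<Longrightarrow> length (state_word (step q g)) = Suc (length (state_word q))"
  by (cases q; cases g) (auto split: if_splits)

context
  fixes \<alpha> \<beta> :: "'k::field"
begin

definition comm_scalar :: "gen \<Rightarrow> 'k" where
  "comm_scalar u = (case u of Gx \<Rightarrow> \<alpha> | Gy \<Rightarrow> \<beta> | _ \<Rightarrow> 1)"

fun step_weight :: "state \<Rightarrow> gen \<Rightarrow> 'k" where
  "step_weight (Letter p k u) g = (if g = Gc then comm_scalar u else 1)"
| "step_weight _ g = 1"

fun state_nf :: "state \<Rightarrow> gen list \<Rightarrow> 'k" where
  "state_nf (Prefix p k) = word (state_word (Prefix p k))"
| "state_nf (Letter p k u) =
     (if p \<and> u = Gz then scaleF (\<alpha> ^ k) (word (Ga # replicate k Gc @ [Gx]))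
        + scaleF (\<beta> ^ k) (word (Ga # replicate k Gc @ [Gy]))
      else word (state_word (Letter p k u)))"
| "state_nf (Ended p k h) =
     (if p \<and> h \<and> \<alpha> ^ k + \<beta> ^ k \<noteq> 1 then 0 else word (state_word (Ended p k h)))"
| "state_nf Dead = 0"

fun nf_from :: "state \<Rightarrow> gen list \<Rightarrow> gen list \<Rightarrow> 'k" where
  "nf_from q [] = state_nf q"
| "nf_from q (g # w) = scaleF (step_weight q g) (nf_from (step q g) w)"

definition nf :: "gen list \<Rightarrow> gen list \<Rightarrow> 'k" where
  "nf = nf_from (Prefix False 0)"

lemma nf_from_Dead [simp]: "nf_from Dead w = 0"
  by (induct w) auto

lemma nf_from_Prefix_replicate:
  "nf_from (Prefix p k) (replicate j Gc @ w) = nf_from (Prefix p (k + j)) w"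
  by (induct j arbitrary: k) auto

lemma nf_from_Letter_Gz:
  "nf_from (Letter True k Gz) v
     = scaleF (\<alpha> ^ k) (nf_from (Letter True k Gx) v) + scaleF (\<beta> ^ k) (nf_from (Letter True k Gy) v)"
proof (induct v arbitrary: k)
  case Nil
  then show ?case by simp
next
  case (Cons g v)
  show ?case
  proof (cases g)
    case Gc
    with Cons[of "Suc k"] show ?thesis
      by (simp add: comm_scalar_def fun_eq_iff algebra_simps)
  next
    case Gb
    then show ?thesis
      by (cases v) (auto simp: fun_eq_iff simp flip: distrib_right)
  qed (simp_all add: fun_eq_iff)
qed

lemma nf_from_kills_relation:
  assumes "r \<in> rels \<alpha> \<beta>"
  shows "(\<Sum>(c, m)\<leftarrow>r. c * nf_from q (u @ m @ v) t) = 0"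
proof (induct u arbitrary: q)
  case Nil
  txt \<open>For a(x + y - z) this is nf_from_Letter_Gz; every other relation is checked state by state.\<close>
  from assms show ?case
    using fun_cong[OF nf_from_Letter_Gz[of 0 v], of t]
    by (cases q) (auto simp: rels_def allgens_def comm_scalar_def algebra_simps)
next
  case (Cons g u)
  have "(\<Sum>(c, m)\<leftarrow>r. c * nf_from q ((g # u) @ m @ v) t)
      = step_weight q g * (\<Sum>(c, m)\<leftarrow>r. c * nf_from (step q g) (u @ m @ v) t)"
    by (simp add: sum_list_const_mult[symmetric] case_prod_unfold algebra_simps)
  with Cons show ?case by simp
qed

lemma idealgens_homogeneous:
  assumes "g \<in> idealgens \<alpha> \<beta> m" and "length t \<noteq> m"
  shows "g t = 0"
  using assms by (auto simp: idealgens_def wrap_def poly_of_def rels_def allgens_def)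

lemma nf_kills_idealgens:
  assumes "g \<in> idealgens \<alpha> \<beta> m"
  shows "(\<Sum>w\<in>{w. length w = m}. scaleF (g w) (nf w)) = 0"
proof
  fix t
  from assms obtain u v r where g: "g = wrap u v r" and r: "r \<in> rels \<alpha> \<beta>"
    and len: "length u + length v + 2 = m"
    by (auto simp: idealgens_def)
  have "(\<Sum>w\<in>{w. length w = m}. scaleF (g w) (nf w)) t
      = (\<Sum>w\<in>{w. length w = m}. poly_of (map (\<lambda>(c, m). (c, u @ m @ v)) r) w * nf w t)"
    by (simp add: sum_fun_apply g wrap_def)
  also have "\<dots> = (\<Sum>(c, m)\<leftarrow>r. c * nf (u @ m @ v) t)"
    using r len
    by (subst sum_poly_of_mult)
      (auto simp: rels_def allgens_def o_def case_prod_unfold)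
  also have "\<dots> = 0"
    unfolding nf_def by (rule nf_from_kills_relation[OF r])
  finally show "(\<Sum>w\<in>{w. length w = m}. scaleF (g w) (nf w)) t = 0 t"
    by simp
qed

definition cong_ideal :: "(gen list \<Rightarrow> 'k) \<Rightarrow> (gen list \<Rightarrow> 'k) \<Rightarrow> bool" where
  "cong_ideal f g \<longleftrightarrow> f - g \<in> V.span (\<Union>n. idealgens \<alpha> \<beta> n)"

notation cong_ideal (infix "\<approx>" 50)

lemma cong_refl [intro]: "f \<approx> f"
  by (simp add: cong_ideal_def V.span_zero)

lemma cong_sym: "f \<approx> g \<Longrightarrow> g \<approx> f"
  unfolding cong_ideal_def using V.span_neg[of "f - g"] by simp

lemma cong_trans [trans]: "f \<approx> g \<Longrightarrow> g \<approx> h \<Longrightarrow> f \<approx> h"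
  unfolding cong_ideal_def using V.span_add[of "f - g" _ "g - h"] by simp

lemma cong_add: "f \<approx> f' \<Longrightarrow> g \<approx> g' \<Longrightarrow> f + g \<approx> f' + g'"
  unfolding cong_ideal_def by (drule (1) V.span_add) (simp add: algebra_simps)

lemma cong_scale: "f \<approx> g \<Longrightarrow> scaleF c f \<approx> scaleF c g"
  unfolding cong_ideal_def by (drule V.span_scale[of _ _ c]) (simp add: V.scale_right_diff_distrib)

lemma cong_zero_if_fixed_by_scalar:
  assumes "f \<approx> scaleF s f" and "s \<noteq> 1"
  shows "f \<approx> 0"
proof -
  have "f - scaleF s f = scaleF (1 - s) f"
    by (simp add: V.scale_left_diff_distrib)
  then have f: "f = scaleF (inverse (1 - s)) (f - scaleF s f)"
    using \<open>s \<noteq> 1\<close> by simp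
  show ?thesis
    using V.span_scale[OF assms(1)[unfolded cong_ideal_def]]
    unfolding cong_ideal_def diff_zero by (subst f)
qed

lemma wrap_Nil [simp]: "wrap u v [] = 0"
  by (simp add: wrap_def poly_of_def fun_eq_iff)

lemma wrap_Cons [simp]: "wrap u v ((c, m) # ts) = scaleF c (word (u @ m @ v)) + wrap u v ts"
  by (simp add: wrap_def poly_of_def word_def fun_eq_iff)

lemma wrap_cong_zero: "r \<in> rels \<alpha> \<beta> \<Longrightarrow> wrap u v r \<approx> 0"
  unfolding cong_ideal_def idealgens_def diff_zero
  by (intro V.span_base UN_I[of "length u + length v + 2"]) auto

lemma word_cong_zero:
  assumes "[(1, m)] \<in> rels \<alpha> \<beta>"
  shows "word (u @ m @ v) \<approx> 0"
  using wrap_cong_zero[OF assms, of u v] by simp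

lemma word_cong_binomial:
  assumes "[(1, m), (c, m')] \<in> rels \<alpha> \<beta>"
  shows "word (u @ m @ v) \<approx> scaleF (- c) (word (u @ m' @ v))"
  using wrap_cong_zero[OF assms, of u v] by (simp add: cong_ideal_def)

lemma word_cong_a_xyz: "word (u @ [Ga, Gz] @ v) \<approx> word (u @ [Ga, Gx] @ v) + word (u @ [Ga, Gy] @ v)"
proof -
  have rel: "[(1, [Ga, Gx]), (1, [Ga, Gy]), (-1, [Ga, Gz])] \<in> rels \<alpha> \<beta>"
    by (simp add: rels_def)
  have "word (u @ [Ga, Gz] @ v) - (word (u @ [Ga, Gx] @ v) + word (u @ [Ga, Gy] @ v))
      = word (u @ [Ga, Gz] @ v) - word (u @ [Ga, Gy] @ v) - word (u @ [Ga, Gx] @ v)"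
    by (simp add: algebra_simps)
  also have "\<dots> \<in> V.span (\<Union>n. idealgens \<alpha> \<beta> n)"
    using cong_sym[OF wrap_cong_zero[OF rel, of u v]] by (simp add: cong_ideal_def)
  finally show ?thesis
    unfolding cong_ideal_def .
qed

lemma word_commute_c_power:
  assumes u: "u \<in> {Gx, Gy, Gz}"
  shows "word (P @ u # replicate j Gc @ S)
    \<approx> scaleF (comm_scalar u ^ j) (word (P @ replicate j Gc @ u # S))"
proof (induct j arbitrary: P)
  case 0
  then show ?case by auto
next
  case (Suc j)
  let ?s = "comm_scalar u"
  have rel: "[(1, [u, Gc]), (- ?s, [Gc, u])] \<in> rels \<alpha> \<beta>"
    using u by (auto simp: rels_def comm_scalar_def)
  have "word (P @ u # replicate (Suc j) Gc @ S) \<approx> scaleF ?s (word ((P @ [Gc]) @ u # replicate j Gc @ S))"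
    using word_cong_binomial[OF rel, of P "replicate j Gc @ S"] by simp
  also have "\<dots> \<approx> scaleF ?s (scaleF (?s ^ j) (word ((P @ [Gc]) @ replicate j Gc @ u # S)))"
    by (rule cong_scale[OF Suc])
  also have "\<dots> = scaleF (?s ^ Suc j) (word (P @ replicate (Suc j) Gc @ u # S))"
    by simp
  finally show ?case .
qed

lemma word_a_c_power_z_cong:
  "word (Ga # replicate k Gc @ Gz # S)
    \<approx> scaleF (\<alpha> ^ k) (word (Ga # replicate k Gc @ Gx # S))
      + scaleF (\<beta> ^ k) (word (Ga # replicate k Gc @ Gy # S))"
proof -
  have "word (Ga # replicate k Gc @ Gz # S) \<approx> word (Ga # Gz # replicate k Gc @ S)"
    using cong_sym[OF word_commute_c_power[of Gz "[Ga]" k S]] by (simp add: comm_scalar_def)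
  also have "\<dots> \<approx> word (Ga # Gx # replicate k Gc @ S) + word (Ga # Gy # replicate k Gc @ S)"
    using word_cong_a_xyz[of "[]" "replicate k Gc @ S"] by simp
  also have "\<dots> \<approx> scaleF (\<alpha> ^ k) (word (Ga # replicate k Gc @ Gx # S))
      + scaleF (\<beta> ^ k) (word (Ga # replicate k Gc @ Gy # S))"
    using word_commute_c_power[of Gx "[Ga]" k S] word_commute_c_power[of Gy "[Ga]" k S]
    by (intro cong_add) (simp_all add: comm_scalar_def)
  finally show ?thesis .
qed

lemma word_a_c_power_x_b_cong_zero:
  assumes "\<alpha> ^ k + \<beta> ^ k \<noteq> 1"
  shows "word (Ga # replicate k Gc @ [Gx, Gb]) \<approx> 0"
proof -
  let ?w = "\<lambda>u. word (Ga # replicate k Gc @ [u, Gb])"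
  have xb_cong: "?w Gx \<approx> ?w u" if "u \<in> {Gy, Gz}" for u
  proof -
    have "[(1, [Gx, Gb]), (-1, [u, Gb])] \<in> rels \<alpha> \<beta>"
      using that by (auto simp: rels_def)
    from word_cong_binomial[OF this, of "Ga # replicate k Gc" "[]"] show ?thesis
      by simp
  qed
  have "?w Gx \<approx> ?w Gz"
    by (rule xb_cong) simp
  also have "\<dots> \<approx> scaleF (\<alpha> ^ k) (?w Gx) + scaleF (\<beta> ^ k) (?w Gy)"
    using word_a_c_power_z_cong[of k "[Gb]"] by simp
  also have "\<dots> \<approx> scaleF (\<alpha> ^ k) (?w Gx) + scaleF (\<beta> ^ k) (?w Gx)"
    using cong_sym[OF xb_cong[of Gy]] by (intro cong_add[OF cong_refl] cong_scale) simp
  also have "\<dots> = scaleF (\<alpha> ^ k + \<beta> ^ k) (?w Gx)"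
    by (simp add: V.scale_left_distrib)
  finally show ?thesis
    using assms by (rule cong_zero_if_fixed_by_scalar)
qed

lemma step_Dead_zero_relation:
  assumes "step q g = Dead" and "q \<noteq> Dead" and "valid_state q"
  shows "state_word q \<noteq> [] \<and> [(1, [last (state_word q), g])] \<in> rels \<alpha> \<beta>"
  using assms by (cases q; cases g) (auto simp: rels_def allgens_def split: if_splits)

lemma word_cong_zero_if_step_Dead:
  assumes "step q g = Dead" and "q \<noteq> Dead" and "valid_state q"
  shows "word (state_word q @ g # v) \<approx> 0"
proof -
  note rel = step_Dead_zero_relation[OF assms]
  have "state_word q @ g # v = butlast (state_word q) @ [last (state_word q), g] @ v"
    using append_butlast_last_id[OF conjunct1[OF rel]] by (metis append.assoc append_Cons append_Nil)
  with word_cong_zero[OF conjunct2[OF rel]] show ?thesis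
    by (simp only:)
qed

lemma word_cong_step:
  assumes "step q g \<noteq> Dead" and "valid_state q"
  shows "word (state_word q @ g # v)
    \<approx> scaleF (step_weight q g) (word (state_word (step q g) @ v))"
proof (cases q)
  case (Letter p k u)
  let ?P = "(if p then [Ga] else []) @ replicate k Gc"
  have u: "u \<in> {Gx, Gy, Gz}"
    using Letter assms(2) by simp
  show ?thesis
  proof (cases g)
    case Gb
    have "[(1, [Gx, Gb]), (-1, [u, Gb])] \<in> rels \<alpha> \<beta>" if "u \<noteq> Gx"
      using u that by (auto simp: rels_def)
    then have "word (?P @ [u, Gb] @ v) \<approx> word (?P @ [Gx, Gb] @ v)"
      using word_cong_binomial[of "[Gx, Gb]" "-1" "[u, Gb]" ?P v]
      by (cases "u = Gx") (auto intro: cong_sym)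
    then show ?thesis
      using Letter Gb by simp
  next
    case Gc
    from word_commute_c_power[OF u, of ?P 1 v] show ?thesis
      using Letter Gc by (simp add: replicate_app_Cons_same)
  qed (use Letter assms(1) in simp_all)
qed (use assms(1) in \<open>auto split: gen.split simp: replicate_app_Cons_same\<close>)

lemma word_cong_state_nf:
  assumes "valid_state q" and "q \<noteq> Dead"
  shows "word (state_word q) \<approx> state_nf q"
proof (cases q)
  case (Letter p k u)
  then show ?thesis
    using word_a_c_power_z_cong[of k "[]"] by auto
next
  case (Ended p k h)
  then show ?thesis
    using word_a_c_power_x_b_cong_zero[of k] by auto
qed (use assms(2) in auto)

lemma word_cong_nf_from:
  assumes "valid_state q" and "q \<noteq> Dead"
  shows "word (state_word q @ v) \<approx> nf_from q v"
  using assms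
proof (induct v arbitrary: q)
  case Nil
  then show ?case
    using word_cong_state_nf by simp
next
  case (Cons g v)
  show ?case
  proof (cases "step q g = Dead")
    case True
    then have "nf_from q (g # v) = 0"
      by simp
    then show ?thesis
      using word_cong_zero_if_step_Dead[OF True Cons.prems(2,1)] by (simp only:)
  next
    case False
    have "word (state_word q @ g # v)
        \<approx> scaleF (step_weight q g) (word (state_word (step q g) @ v))"
      using word_cong_step[OF False Cons.prems(1)] .
    also have "\<dots> \<approx> scaleF (step_weight q g) (nf_from (step q g) v)"
      using Cons.hyps[OF valid_state_step[OF Cons.prems(1)] False] by (rule cong_scale)
    finally show ?thesis
      by (simp only: nf_from.simps)
  qed
qed

lemma word_cong_nf: "word w \<approx> nf w"
  using word_cong_nf_from[of "Prefix False 0" w] by (simp add: nf_def)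

definition normal_states :: "nat \<Rightarrow> state list" where
  "normal_states n =
     [Prefix False (n + 3), Prefix True (n + 2),
      Letter False (n + 2) Gx, Letter False (n + 2) Gy, Letter False (n + 2) Gz,
      Letter True (n + 1) Gx, Letter True (n + 1) Gy,
      Ended False (n + 2) False, Ended False (n + 1) True, Ended True (n + 1) False]
   @ (if \<alpha> ^ n + \<beta> ^ n = 1 then [Ended True n True] else [])"

definition normal_words :: "nat \<Rightarrow> gen list set" where
  "normal_words n = state_word ` set (normal_states n)"

lemma length_normal_word: "t \<in> normal_words n \<Longrightarrow> length t = n + 3"
  by (auto simp: normal_words_def normal_states_def split: if_splits)

lemma nf_normal_word: "t \<in> normal_words n \<Longrightarrow> nf t = word t"
  by (auto simp: normal_words_def normal_states_def nf_def nf_from_Prefix_replicate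
      nf_from_Prefix_replicate[where w = "[]", simplified] split: if_splits)

lemma card_normal_words: "card (normal_words n) = (if \<alpha> ^ n + \<beta> ^ n = 1 then 11 else 10)"
proof -
  let ?ws = "map state_word (normal_states n)"
  txt \<open>The first, the penultimate and the last letter already tell the normal words apart.\<close>
  have "distinct (map (\<lambda>t. (hd t, last (butlast t), last t)) ?ws)"
    by (simp add: normal_states_def replicate_append_same[symmetric] butlast_append
        del: replicate_Suc)
  then have "distinct ?ws"
    by (metis distinct_map)
  then have "card (set ?ws) = length ?ws"
    by (rule distinct_card)
  then show ?thesis
    by (simp add: normal_words_def normal_states_def)
qed

lemma state_nf_support:
  assumes "valid_state q" and "state_nf q t \<noteq> 0" and "length (state_word q) = n + 3"
  shows "t \<in> normal_words n"
proof (cases q)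
  case (Prefix p k)
  then show ?thesis
    using assms by (cases p) (auto simp: normal_words_def normal_states_def word_def split: if_splits)
next
  case (Letter p k u)
  then have "u \<in> {Gx, Gy, Gz}" and "k = (if p then n + 1 else n + 2)"
    using assms(1,3) by auto
  then show ?thesis
    using Letter assms(2)
    by (cases p) (auto simp: normal_words_def normal_states_def word_def split: if_splits)
next
  case (Ended p k h)
  then show ?thesis
    using assms by (cases p; cases h) (auto simp: normal_words_def normal_states_def word_def split: if_splits)
qed (use assms in simp)

lemma nf_from_support:
  assumes "valid_state q" and "nf_from q v t \<noteq> 0"
    and "length (state_word q) + length v = n + 3"
  shows "t \<in> normal_words n"
  using assms
proof (induct v arbitrary: q)
  case Nil
  then show ?case
    using state_nf_support by simp
next
  case (Cons g v)
  then have "nf_from (step q g) v t \<noteq> 0"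
    by simp
  moreover from this have "step q g \<noteq> Dead"
    by auto
  then have "length (state_word (step q g)) + length v = n + 3"
    using Cons.prems(3) by (simp add: length_state_word_step)
  ultimately show ?case
    using Cons.hyps[OF valid_state_step[OF Cons.prems(1)]] by blast
qed

lemma nf_support: "length w = n + 3 \<Longrightarrow> nf w t \<noteq> 0 \<Longrightarrow> t \<in> normal_words n"
  using nf_from_support[of "Prefix False 0" w t n] by (simp add: nf_def)

lemma word_minus_nf_in_span:
  assumes "length w = n + 3"
  shows "word w - nf w \<in> V.span (idealgens \<alpha> \<beta> (n + 3))"
proof (rule homogeneous_component_in_span[where G = "idealgens \<alpha> \<beta>" and m = "n + 3"])
  show "g t = 0" if "g \<in> idealgens \<alpha> \<beta> m" and "length t \<noteq> m" for m g t
    using idealgens_homogeneous that .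
  show "word w - nf w \<in> V.span (\<Union>m. idealgens \<alpha> \<beta> m)"
    using word_cong_nf unfolding cong_ideal_def .
  fix t :: "gen list"
  assume "length t \<noteq> n + 3"
  then have "t \<noteq> w" and "nf w t = 0"
    using assms nf_support[of w n t] length_normal_word[of t n] by auto
  then show "(word w - nf w) t = 0"
    by (simp add: word_def)
qed

end

lemma hA_plus_3:
  fixes \<alpha> \<beta> :: "'k::field"
  shows "hA \<alpha> \<beta> (n + 3) = (if \<alpha> ^ n + \<beta> ^ n = 1 then 11 else 10)"
proof -
  let ?W = "{w :: gen list. length w = n + 3}"
  have N_sub: "normal_words \<alpha> \<beta> n \<subseteq> ?W"
    using length_normal_word by blast
  have "V.dim (idealgens \<alpha> \<beta> (n + 3)) = card ?W - card (normal_words \<alpha> \<beta> n)"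
  proof (rule dim_by_normal_form[where nf = "nf \<alpha> \<beta>"])
    show "g t = 0" if "g \<in> idealgens \<alpha> \<beta> (n + 3)" and "t \<notin> ?W" for g t
      using idealgens_homogeneous that by simp
    show "nf \<alpha> \<beta> w t = 0" if "w \<in> ?W" and "t \<notin> normal_words \<alpha> \<beta> n" for w t
      using nf_support that by blast
  qed (use N_sub nf_kills_idealgens word_minus_nf_in_span nf_normal_word in simp_all)
  moreover have "card (normal_words \<alpha> \<beta> n) \<le> card ?W"
    using N_sub by (simp add: card_mono)
  ultimately show ?thesis
    by (simp add: hA_def card_words_length card_normal_words)
qed

theorem proposition5p3:
  fixes \<alpha> \<beta> :: "'k::field"
  assumes "\<alpha> \<noteq> 0" and "\<beta> \<noteq> 0"
  shows "(\<forall>n::nat. hA \<alpha> \<beta> (n + 3) = (if \<alpha> ^ n + \<beta> ^ n = 1 then 11 else 10))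
    \<and> ((\<forall>n::nat\<ge>3. \<forall>a b :: 'k. a \<noteq> 0 \<longrightarrow> b \<noteq> 0 \<longrightarrow> a ^ n + b ^ n \<noteq> 1)
       \<longleftrightarrow> (\<forall>a b :: 'k. a \<noteq> 0 \<longrightarrow> b \<noteq> 0 \<longrightarrow> (\<forall>i\<ge>6. hA a b i = 10)))"
proof -
  txt \<open>The formula for h_A holds for all \<alpha> and \<beta>.\<close>
  have shift: "(\<forall>i\<ge>6. P i) \<longleftrightarrow> (\<forall>n\<ge>3. P (n + 3))" for P :: "nat \<Rightarrow> bool"
  proof
    assume shifted: "\<forall>n\<ge>3. P (n + 3)"
    show "\<forall>i\<ge>6. P i"
    proof (intro allI impI)
      fix i :: nat
      assume "6 \<le> i"
      then show "P i"
        using shifted[rule_format, of "i - 3"] by simp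
    qed
  qed simp
  show ?thesis
    unfolding shift by (auto simp: hA_plus_3)
qed

end
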